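(* Let $L=K$, let ${\bf X}$ and ${\bf Z}$ be real $n\times K$ matrices, ${\bf D_X},{\bf D_Z}$ diagonal $K\times K$ matrices, $\Psi_n=\frac1n{\bf D_Z}{\bf Z}^T{\bf X}{\bf D_X}$, $c\in(0,1)$ and $J\subseteq\{1,\dots,K\}$ nonempty. Suppose that for some $\widetilde\kappa>0$ $$\inf_{\Delta\in C_J\setminus\{0\}}\frac{|{\bf X}{\bf D_X}\Delta|_2}{\sqrt n\,|\Delta_J|_2}\ge\widetilde\kappa,$$ and that for some $0<\eta<1$ $$\Big|\frac1n\big({\bf X}{\bf D_X}-{\bf Z}{\bf D_Z}\big)^T{\bf X}{\bf D_X}\Big|_\infty\le\frac{\eta(1-c)^2\widetilde\kappa^2}{4|J|},$$ where for a matrix $|\cdot|_\infty$ denotes the maximal absolute entry. Then $$\kappa_{1,J}\ge\frac{(1-\eta)(1-c)^2\widetilde\kappa^2}{4|J|}.$$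
   Context: $\Delta_J$ zeroes coordinates outside $J$, $J^c$ complement, $|\cdot|_p$ the $\ell_p$ norm of a vector. $C_J=\{\Delta\in\mathbb R^K:|\Delta_{J^c}|_1\le\frac{1+c}{1-c}|\Delta_J|_1\}$; $\kappa_{1,J}=\inf\{|\Psi_n\Delta|_\infty:\Delta\in C_J,|\Delta|_1=1\}$. In the paper ${\bf D_X}={\rm diag}(x_{k*}^{-1})$ and ${\bf D_Z}={\rm diag}(z_{l*}^{-1})$ with $x_{k*},z_{l*}$ the maximal absolute entries of the columns of ${\bf X},{\bf Z}$. *)

theory Defs
  imports "HOL-Analysis.Analysis"
begin

text \<open>Vectors in R^K are real^'k; index set {1..K} is the finite type 'k.\<close>

definition l1norm :: "real^'k \<Rightarrow> real" where
  "l1norm v = (\<Sum>i\<in>UNIV. \<bar>v $ i\<bar>)"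

definition linfnorm :: "real^'k \<Rightarrow> real" where
  "linfnorm v = Max (range (\<lambda>i. \<bar>v $ i\<bar>))"

definition mat_maxabs :: "real^'c^'r \<Rightarrow> real" where
  "mat_maxabs M = Max {\<bar>M $ i $ j\<bar> | i j. True}"

definition restr :: "'k set \<Rightarrow> real^'k \<Rightarrow> real^'k" where
  "restr J v = (\<chi> i. if i \<in> J then v $ i else 0)"

definition coneC :: "real \<Rightarrow> 'k set \<Rightarrow> (real^'k) set" where
  "coneC c J = {\<Delta>. l1norm (restr (- J) \<Delta>) \<le> (1 + c) / (1 - c) * l1norm (restr J \<Delta>)}"

definition kappa1 :: "real \<Rightarrow> real^'k^'k \<Rightarrow> 'k set \<Rightarrow> real" where
  "kappa1 c Psi J = Inf {linfnorm (Psi *v \<Delta>) | \<Delta>. \<Delta> \<in> coneC c J \<and> l1norm \<Delta> = 1}"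

definition is_diag :: "real^'k^'k \<Rightarrow> bool" where
  "is_diag D \<longleftrightarrow> (\<forall>i j. i \<noteq> j \<longrightarrow> D $ i $ j = 0)"

end

theory Submission imports Defs begin

(* Write A = X DX, B = Z DZ and n for the number of rows.  Since DZ is
   diagonal, Psi_n = (1/n) B^T A, and for every direction Delta
     Delta^T Psi_n Delta = |A Delta|_2^2 / n  -  Delta^T M Delta,   M = (1/n) (A - B)^T A.
   For Delta in the cone C_J with |Delta|_1 = 1 we have
     |Delta_J|_2^2 >= (1-c)^2 / (4|J|)                 (cone property and Cauchy-Schwarz),
     |A Delta|_2^2 / n >= kt^2 |Delta_J|_2^2           (restricted eigenvalue hypothesis),
     |Delta^T M Delta| <= |M|_inf |Delta|_1^2,   Delta^T Psi_n Delta <= |Psi_n Delta|_inf.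
   Combining these gives the bound for |Psi_n Delta|_inf; taking the infimum over the
   (nonempty) constraint set gives the bound on kappa_{1,J}. *)

lemma abs_entry_le_mat_maxabs: "\<bar>M $ i $ j\<bar> \<le> mat_maxabs (M :: real^'c^'r)"
proof -
  have "{\<bar>M $ i $ j\<bar> | i j. True} = (\<lambda>(i, j). \<bar>M $ i $ j\<bar>) ` UNIV" by auto
  then show ?thesis unfolding mat_maxabs_def by (simp only:) (rule Max_ge, auto)
qed

lemma abs_component_le_linfnorm: "\<bar>v $ i\<bar> \<le> linfnorm (v :: real^'k)"
  unfolding linfnorm_def by (rule Max_ge) auto

lemma inner_le_linfnorm_l1norm: "x \<bullet> v \<le> linfnorm v * l1norm (x :: real^'k)"
proof -
  have "x \<bullet> v = (\<Sum>i\<in>UNIV. x $ i * v $ i)" by (simp add: inner_vec_def)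
  also have "\<dots> \<le> (\<Sum>i\<in>UNIV. \<bar>x $ i\<bar> * linfnorm v)"
  proof (rule sum_mono)
    fix i
    have "x $ i * v $ i \<le> \<bar>x $ i\<bar> * \<bar>v $ i\<bar>" by (metis abs_ge_self abs_mult)
    also have "\<dots> \<le> \<bar>x $ i\<bar> * linfnorm v"
      by (intro mult_left_mono abs_component_le_linfnorm) simp
    finally show "x $ i * v $ i \<le> \<bar>x $ i\<bar> * linfnorm v" .
  qed
  finally show ?thesis by (simp add: l1norm_def sum_distrib_left mult.commute)
qed

lemma bilinear_form_bound:
  fixes x :: "real^'r" and M :: "real^'k^'r" and y :: "real^'k"
  shows "\<bar>x \<bullet> (M *v y)\<bar> \<le> mat_maxabs M * l1norm x * l1norm y"
proof -
  have "x \<bullet> (M *v y) = (\<Sum>i\<in>UNIV. \<Sum>j\<in>UNIV. x $ i * M $ i $ j * y $ j)"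
    by (simp add: inner_vec_def matrix_vector_mult_def sum_distrib_left mult.assoc)
  then have "\<bar>x \<bullet> (M *v y)\<bar> \<le> (\<Sum>i\<in>UNIV. \<bar>\<Sum>j\<in>UNIV. x $ i * M $ i $ j * y $ j\<bar>)"
    by (simp only: sum_abs)
  also have "\<dots> \<le> (\<Sum>i\<in>UNIV. \<Sum>j\<in>UNIV. \<bar>x $ i * M $ i $ j * y $ j\<bar>)"
    by (intro sum_mono sum_abs)
  also have "\<dots> \<le> (\<Sum>i\<in>UNIV. \<Sum>j\<in>UNIV. \<bar>x $ i\<bar> * mat_maxabs M * \<bar>y $ j\<bar>)"
    unfolding abs_mult
    by (intro sum_mono mult_right_mono mult_left_mono abs_entry_le_mat_maxabs) simp_all
  also have "\<dots> = mat_maxabs M * l1norm x * l1norm y"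
    by (simp add: l1norm_def sum_distrib_left sum_distrib_right mult_ac)
  finally show ?thesis .
qed

lemma l1norm_restr_split:
  "l1norm (\<Delta> :: real^'k) = l1norm (restr J \<Delta>) + l1norm (restr (- J) \<Delta>)"
  unfolding l1norm_def restr_def by (simp add: sum.distrib[symmetric]) (intro sum.cong, auto)

lemma l1norm_restr: "l1norm (restr J (\<Delta> :: real^'k)) = (\<Sum>i\<in>J. \<bar>\<Delta> $ i\<bar>)"
  unfolding l1norm_def restr_def by (simp add: if_distrib sum.If_cases)

lemma norm_restr_squared: "(norm (restr J (\<Delta> :: real^'k)))\<^sup>2 = (\<Sum>i\<in>J. (\<Delta> $ i)\<^sup>2)"
  unfolding power2_norm_eq_inner restr_def
  by (simp add: inner_vec_def if_distrib sum.If_cases power2_eq_square)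

text \<open>Cauchy-Schwarz on the coordinates in J: |Delta_J|_1 <= sqrt |J| * |Delta_J|_2.\<close>
lemma l1norm_restr_le: "l1norm (restr J (\<Delta> :: real^'k)) \<le> sqrt (card J) * norm (restr J \<Delta>)"
proof (rule power2_le_imp_le)
  have "(l1norm (restr J \<Delta>))\<^sup>2 \<le> (\<Sum>i\<in>J. \<bar>\<Delta> $ i\<bar>\<^sup>2) * card J"
    unfolding l1norm_restr by (rule sum_squared_le_sum_of_squares)
  also have "\<dots> = (sqrt (card J) * norm (restr J \<Delta>))\<^sup>2"
    by (simp add: power_mult_distrib norm_restr_squared)
  finally show "(l1norm (restr J \<Delta>))\<^sup>2 \<le> (sqrt (card J) * norm (restr J \<Delta>))\<^sup>2" .
qed simp

lemma cone_l1norm_le: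
  assumes "c < 1" and "\<Delta> \<in> coneC c J"
  shows "(1 - c) / 2 * l1norm \<Delta> \<le> l1norm (restr J \<Delta>)"
proof -
  have "l1norm \<Delta> \<le> l1norm (restr J \<Delta>) + (1 + c) / (1 - c) * l1norm (restr J \<Delta>)"
    using assms(2) l1norm_restr_split[of \<Delta> J] unfolding coneC_def by simp
  also have "\<dots> = 2 / (1 - c) * l1norm (restr J \<Delta>)"
    using assms(1) by (simp add: field_simps)
  finally show ?thesis using assms(1) by (simp add: field_simps)
qed

lemma cone_norm_restr_lower:
  assumes "c < 1" and "\<Delta> \<in> coneC c J" and "l1norm \<Delta> = 1" and "J \<noteq> {}"
  shows "(1 - c)\<^sup>2 / (4 * real (card J)) \<le> (norm (restr J \<Delta>))\<^sup>2"
proof -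
  have "(1 - c) / 2 \<le> sqrt (card J) * norm (restr J \<Delta>)"
    using cone_l1norm_le[OF assms(1,2)] l1norm_restr_le[of J \<Delta>] assms(3) by simp
  then have "((1 - c) / 2)\<^sup>2 \<le> (sqrt (card J) * norm (restr J \<Delta>))\<^sup>2"
    using assms(1) by (intro power_mono) simp_all
  then have "(1 - c)\<^sup>2 / 4 \<le> card J * (norm (restr J \<Delta>))\<^sup>2"
    by (simp add: power_mult_distrib power_divide)
  moreover have "card J > 0" using assms(4) by (simp add: card_gt_0_iff)
  ultimately show ?thesis by (simp add: field_simps)
qed

lemma cone_has_unit_vector:
  assumes "\<bar>c\<bar> < 1" and "j \<in> J"
  shows "axis j 1 \<in> coneC c J" and "l1norm (axis j (1 :: real)) = 1"
proof -
  have "restr (- J) (axis j (1 :: real)) = 0"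
    using assms(2) by (auto simp: vec_eq_iff restr_def axis_def)
  moreover have "0 \<le> (1 + c) / (1 - c) * l1norm (restr J (axis j (1 :: real)))"
    using assms(1) by (intro mult_nonneg_nonneg) (simp_all add: l1norm_def sum_nonneg)
  ultimately show "axis j 1 \<in> coneC c J"
    unfolding coneC_def by (simp add: l1norm_def)
  show "l1norm (axis j (1 :: real)) = 1"
    unfolding l1norm_def axis_def by (simp add: if_distrib sum.If_cases)
qed

lemma restricted_eigenvalue_bound:
  fixes A :: "real^'k^'n"
  assumes RE: "kt \<le> Inf {norm (A *v \<Delta>) / (sqrt (real CARD('n)) * norm (restr J \<Delta>)) | \<Delta>.
                 \<Delta> \<in> coneC c J - {0}}"
    and "0 \<le> kt" and "\<Delta> \<in> coneC c J" and "restr J \<Delta> \<noteq> 0"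
  shows "kt\<^sup>2 * (norm (restr J \<Delta>))\<^sup>2 \<le> (norm (A *v \<Delta>))\<^sup>2 / CARD('n)"
proof -
  let ?T = "{norm (A *v \<Delta>) / (sqrt (real CARD('n)) * norm (restr J \<Delta>)) | \<Delta>.
              \<Delta> \<in> coneC c J - {0}}"
  let ?t = "norm (restr J \<Delta>)" and ?s = "sqrt (real CARD('n))"
  have "\<Delta> \<noteq> 0"
  proof
    assume "\<Delta> = 0"
    then have "restr J \<Delta> = 0" by (simp add: restr_def vec_eq_iff)
    with assms(4) show False by simp
  qed
  then have "norm (A *v \<Delta>) / (?s * ?t) \<in> ?T" using assms(3) by blast
  moreover have "bdd_below ?T" by (rule bdd_belowI[of _ 0]) auto
  ultimately have "Inf ?T \<le> norm (A *v \<Delta>) / (?s * ?t)" by (rule cInf_lower)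
  with RE have "kt \<le> norm (A *v \<Delta>) / (?s * ?t)" by (rule order_trans)
  then have "kt * (?s * ?t) \<le> norm (A *v \<Delta>)" using assms(4) by (simp add: field_simps)
  then have "(kt * (?s * ?t))\<^sup>2 \<le> (norm (A *v \<Delta>))\<^sup>2" using assms(2) by (intro power_mono) simp_all
  then show ?thesis by (simp add: power_mult_distrib field_simps)
qed

lemma diag_transpose: "is_diag D \<Longrightarrow> transpose D = D"
  unfolding is_diag_def by (auto simp: vec_eq_iff transpose_def) metis

lemma gram_decomposition:
  fixes A B :: "real^'k^'n" and \<Delta> :: "real^'k"
  shows "\<Delta> \<bullet> ((transpose B ** A) *v \<Delta>)
           = (norm (A *v \<Delta>))\<^sup>2 - \<Delta> \<bullet> ((transpose (A - B) ** A) *v \<Delta>)"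
proof -
  have "\<Delta> \<bullet> ((transpose M ** A) *v \<Delta>) = (M *v \<Delta>) \<bullet> (A *v \<Delta>)" for M :: "real^'k^'n"
    unfolding matrix_vector_mul_assoc[symmetric] dot_lmul_matrix[symmetric]
      vector_transpose_matrix ..
  then show ?thesis
    by (simp add: matrix_vector_mult_diff_rdistrib inner_diff_left power2_norm_eq_inner)
qed

lemma sup_norm_lower_bound:
  fixes A B :: "real^'k^'n" and \<Delta> :: "real^'k"
  defines "n \<equiv> real CARD('n)"
  assumes "c < 1" and "J \<noteq> {}" and "0 \<le> kt"
    and RE: "kt \<le> Inf {norm (A *v \<Delta>) / (sqrt n * norm (restr J \<Delta>)) | \<Delta>.
                 \<Delta> \<in> coneC c J - {0}}"
    and M: "mat_maxabs ((1 / n) *\<^sub>R (transpose (A - B) ** A))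
              \<le> eta * (1 - c)\<^sup>2 * kt\<^sup>2 / (4 * real (card J))"
    and "\<Delta> \<in> coneC c J" and "l1norm \<Delta> = 1"
  shows "(1 - eta) * (1 - c)\<^sup>2 * kt\<^sup>2 / (4 * real (card J))
           \<le> linfnorm (((1 / n) *\<^sub>R (transpose B ** A)) *v \<Delta>)"
proof -
  let ?M = "(1 / n) *\<^sub>R (transpose (A - B) ** A)" and ?Psi = "(1 / n) *\<^sub>R (transpose B ** A)"
  have mass: "(1 - c)\<^sup>2 / (4 * real (card J)) \<le> (norm (restr J \<Delta>))\<^sup>2"
    by (rule cone_norm_restr_lower[OF assms(2,7,8,3)])
  have "restr J \<Delta> \<noteq> 0"
  proof
    assume "restr J \<Delta> = 0"
    then have "(1 - c)\<^sup>2 / (4 * real (card J)) \<le> 0" using mass by simp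
    moreover have "card J > 0" using assms(3) by (simp add: card_gt_0_iff)
    ultimately show False using assms(2) by (simp add: field_simps)
  qed
  then have "kt\<^sup>2 * (norm (restr J \<Delta>))\<^sup>2 \<le> (norm (A *v \<Delta>))\<^sup>2 / n"
    using restricted_eigenvalue_bound[OF RE[unfolded n_def] assms(4,7)] n_def by simp
  moreover have "kt\<^sup>2 * ((1 - c)\<^sup>2 / (4 * real (card J))) \<le> kt\<^sup>2 * (norm (restr J \<Delta>))\<^sup>2"
    using mass by (intro mult_left_mono) simp_all
  ultimately have signal: "kt\<^sup>2 * (1 - c)\<^sup>2 / (4 * real (card J)) \<le> (norm (A *v \<Delta>))\<^sup>2 / n" by simp
  have noise: "\<Delta> \<bullet> (?M *v \<Delta>) \<le> eta * (1 - c)\<^sup>2 * kt\<^sup>2 / (4 * real (card J))"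
    using bilinear_form_bound[of \<Delta> ?M \<Delta>] assms(8) M by simp
  have "(1 - eta) * (1 - c)\<^sup>2 * kt\<^sup>2 / (4 * real (card J))
      = kt\<^sup>2 * (1 - c)\<^sup>2 / (4 * real (card J)) - eta * (1 - c)\<^sup>2 * kt\<^sup>2 / (4 * real (card J))"
    by (simp add: diff_divide_distrib[symmetric] algebra_simps)
  also have "\<dots> \<le> (norm (A *v \<Delta>))\<^sup>2 / n - \<Delta> \<bullet> (?M *v \<Delta>)"
    using signal noise by (rule diff_mono)
  also have "\<dots> = \<Delta> \<bullet> (?Psi *v \<Delta>)"
    using gram_decomposition[of \<Delta> B A]
    by (simp add: scaleR_matrix_vector_assoc[symmetric] diff_divide_distrib)
  also have "\<dots> \<le> linfnorm (?Psi *v \<Delta>)"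
    using inner_le_linfnorm_l1norm[of \<Delta> "?Psi *v \<Delta>"] assms(8) by simp
  finally show ?thesis .
qed

theorem proposition4:
  fixes X Z :: "real^'k^'n" and DX DZ :: "real^'k^'k"
    and c eta kt :: real and J :: "'k set"
  assumes "is_diag DX" and "is_diag DZ"
    and "0 < c" and "c < 1"
    and "J \<noteq> {}"
    and "kt > 0"
    and "Inf {norm ((X ** DX) *v \<Delta>) / (sqrt (real CARD('n)) * norm (restr J \<Delta>)) | \<Delta>.
              \<Delta> \<in> coneC c J - {0}} \<ge> kt"
    and "0 < eta" and "eta < 1"
    and "mat_maxabs ((1 / real CARD('n)) *\<^sub>R (transpose (X ** DX - Z ** DZ) ** (X ** DX)))
           \<le> eta * (1 - c)^2 * kt^2 / (4 * real (card J))"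
  shows "kappa1 c ((1 / real CARD('n)) *\<^sub>R (DZ ** transpose Z ** X ** DX)) J
           \<ge> (1 - eta) * (1 - c)^2 * kt^2 / (4 * real (card J))"
proof -
  text \<open>Since DZ is symmetric, Psi_n = (1/n) (Z DZ)^T (X DX).\<close>
  have Psi: "DZ ** transpose Z ** X ** DX = transpose (Z ** DZ) ** (X ** DX)"
    by (simp add: matrix_transpose_mul diag_transpose[OF assms(2)] matrix_mul_assoc)
  let ?S = "{linfnorm (((1 / real CARD('n)) *\<^sub>R (transpose (Z ** DZ) ** (X ** DX))) *v \<Delta>) | \<Delta>.
              \<Delta> \<in> coneC c J \<and> l1norm \<Delta> = 1}"
  obtain j where "j \<in> J" using assms(5) by blast
  then have "axis j 1 \<in> coneC c J \<and> l1norm (axis j (1 :: real)) = 1"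
    using cone_has_unit_vector[of c j J] assms(3,4) by simp
  then have "?S \<noteq> {}" by blast
  moreover have "(1 - eta) * (1 - c)\<^sup>2 * kt\<^sup>2 / (4 * real (card J)) \<le> s" if "s \<in> ?S" for s
  proof -
    obtain \<Delta> where "\<Delta> \<in> coneC c J" "l1norm \<Delta> = 1"
      and s: "s = linfnorm (((1 / real CARD('n)) *\<^sub>R (transpose (Z ** DZ) ** (X ** DX))) *v \<Delta>)"
      using \<open>s \<in> ?S\<close> by blast
    from sup_norm_lower_bound[OF assms(4,5) _ assms(7,10) this(1,2)] assms(6) show ?thesis
      unfolding s by simp
  qed
  ultimately show ?thesis unfolding kappa1_def Psi by (rule cInf_greatest)
qed

end
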